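(* Let $S$ be a semiregular pseudocompact semitopological semigroup which is an orthogonal sum $S=\sum_{i\in\mathscr I}B^0_{\lambda_i}(S_i)$ of topological Brandt $\lambda_i^0$-extensions of semitopological monoids $S_i$ with zeros. Then for every open neighbourhood $U(0)$ of the zero $0$ of $S$ the set of triples $(i,\alpha_i,\beta_i)$ with $i\in\mathscr I$, $\alpha_i,\beta_i\in\lambda_i$ and $(S_i)_{\alpha_i,\beta_i}\not\subseteq U(0)$ is finite.
   Context: All spaces are Hausdorff; a semitopological semigroup is a Hausdorff space with separately continuous associative operation. A space is semiregular if it has a base of regular open sets ($A$ is regular open if $\operatorname{int}\operatorname{cl}A=A$); pseudocompact means every locally finite family of non-empty open sets is finite. For a semigroup $T$ with zero $0_T$ and a cardinal $\lambda\ge1$, $B^0_\lambda(T)=(\lambda\times (T\setminus\{0_T\})\times\lambda)\cup\{0\}$ with $(\alpha,a,\beta)(\gamma,b,\delta)=(\alpha,ab,\delta)$ if $\beta=\gamma$ and $ab\ne0_T$, and $0$ otherwise, $0$ a zero. For $A\subseteq T$, $A_{\alpha,\beta}=\{(\alpha,s,\beta):s\in A\setminus\{0_T\}\}\cup\{0\}$ if $0_T\in A$ and $\{(\alpha,s,\beta):s\in A\}$ otherwise. A topological Brandt $\lambda^0$-extension of a semitopological monoid $T$ with zero is $B^0_\lambda(T)$ with a topology making it a semitopological semigroup such that for some $\alpha\in\lambda$ the map $s\mapsto(\alpha,s,\alpha)$ ($0_T\mapsto0$) is a homeomorphism $T\to T_{\alpha,\alpha}$. The orthogonal sum of semigroups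 $T_\iota$ with zeros is $\{0\}\cup\bigcup_\iota(T_\iota\setminus\{0_\iota\})$ with products computed in $T_\iota$ when both factors lie in the same $T_\iota$ and the product is non-zero, and $0$ otherwise. *)

theory Defs
  imports "HOL-Analysis.Analysis"
begin

definition regular_open_in :: "'a topology \<Rightarrow> 'a set \<Rightarrow> bool" where
  "regular_open_in X A \<longleftrightarrow> X interior_of (X closure_of A) = A"

definition semiregular_space :: "'a topology \<Rightarrow> bool" where
  "semiregular_space X \<longleftrightarrow>
     (\<forall>U x. openin X U \<and> x \<in> U \<longrightarrow>
        (\<exists>V. regular_open_in X V \<and> x \<in> V \<and> V \<subseteq> U))"

definition pseudocompact_space :: "'a topology \<Rightarrow> bool" where
  "pseudocompact_space X \<longleftrightarrow>
     (\<forall>\<U>. (\<forall>U\<in>\<U>. openin X U \<and> U \<noteq> {}) \<and> locally_finite_in X \<U> \<longrightarrow> finite \<U>)"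

definition semitop_semigroup :: "'a topology \<Rightarrow> ('a \<Rightarrow> 'a \<Rightarrow> 'a) \<Rightarrow> bool" where
  "semitop_semigroup X m \<longleftrightarrow>
     Hausdorff_space X \<and>
     (\<forall>x\<in>topspace X. \<forall>y\<in>topspace X. m x y \<in> topspace X) \<and>
     (\<forall>x\<in>topspace X. \<forall>y\<in>topspace X. \<forall>z\<in>topspace X. m (m x y) z = m x (m y z)) \<and>
     (\<forall>a\<in>topspace X. continuous_map X X (\<lambda>x. m a x) \<and> continuous_map X X (\<lambda>x. m x a))"

definition semitop_monoid_with_zero ::
    "'a topology \<Rightarrow> ('a \<Rightarrow> 'a \<Rightarrow> 'a) \<Rightarrow> 'a \<Rightarrow> 'a \<Rightarrow> bool" where
  "semitop_monoid_with_zero X m z e \<longleftrightarrow>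
     semitop_semigroup X m \<and> z \<in> topspace X \<and> e \<in> topspace X \<and>
     (\<forall>x\<in>topspace X. m z x = z \<and> m x z = z) \<and>
     (\<forall>x\<in>topspace X. m e x = x \<and> m x e = x)"

text \<open>Elements of \<open>\<Sum>_{i\<in>I} B^0_{\<lambda>_i}(S_i)\<close>: \<open>None\<close> is the zero \<open>0\<close>,
  \<open>Some (i, \<alpha>, s, \<beta>)\<close> is the triple \<open>(\<alpha>, s, \<beta>)\<close> of the \<open>i\<close>-th summand.
  The cardinal \<open>\<lambda>_i\<close> is represented by a set \<open>\<Lambda> i\<close> of that cardinality;
  \<open>T i\<close> is the carrier of \<open>S_i\<close>, \<open>m i\<close> its multiplication, \<open>z i\<close> its zero.\<close>

definition osum_carrier ::
    "'i set \<Rightarrow> ('i \<Rightarrow> 'c set) \<Rightarrow> ('i \<Rightarrow> 'a set) \<Rightarrow> ('i \<Rightarrow> 'a)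
     \<Rightarrow> ('i \<times> 'c \<times> 'a \<times> 'c) option set" where
  "osum_carrier I \<Lambda> T z =
     insert None {Some (i, \<alpha>, s, \<beta>) | i \<alpha> s \<beta>.
        i \<in> I \<and> \<alpha> \<in> \<Lambda> i \<and> \<beta> \<in> \<Lambda> i \<and> s \<in> T i \<and> s \<noteq> z i}"

fun osum_mult ::
    "('i \<Rightarrow> 'a \<Rightarrow> 'a \<Rightarrow> 'a) \<Rightarrow> ('i \<Rightarrow> 'a)
     \<Rightarrow> ('i \<times> 'c \<times> 'a \<times> 'c) option \<Rightarrow> ('i \<times> 'c \<times> 'a \<times> 'c) option
     \<Rightarrow> ('i \<times> 'c \<times> 'a \<times> 'c) option" where
  "osum_mult m z (Some (i, \<alpha>, a, \<beta>)) (Some (j, \<gamma>, b, \<delta>)) =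
     (if i = j \<and> \<beta> = \<gamma> \<and> m i a b \<noteq> z i then Some (i, \<alpha>, m i a b, \<delta>) else None)"
| "osum_mult m z _ _ = None"

text \<open>The set \<open>(S_i)_{\<alpha>,\<beta>}\<close> (note \<open>0_{S_i} \<in> S_i\<close>, so it contains \<open>0\<close>).\<close>
definition block ::
    "('i \<Rightarrow> 'a set) \<Rightarrow> ('i \<Rightarrow> 'a) \<Rightarrow> 'i \<Rightarrow> 'c \<Rightarrow> 'c
     \<Rightarrow> ('i \<times> 'c \<times> 'a \<times> 'c) option set" where
  "block T z i \<alpha> \<beta> = insert None {Some (i, \<alpha>, s, \<beta>) | s. s \<in> T i \<and> s \<noteq> z i}"

definition diag_emb ::
    "('i \<Rightarrow> 'a) \<Rightarrow> 'i \<Rightarrow> 'c \<Rightarrow> 'a \<Rightarrow> ('i \<times> 'c \<times> 'a \<times> 'c) option" where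
  "diag_emb z i \<alpha> s = (if s = z i then None else Some (i, \<alpha>, s, \<alpha>))"

end

theory Submission
  imports Defs
begin

text \<open>Away from the zero, \<open>S\<close> is partitioned into the sets \<open>(S_i)_{\<alpha>,\<beta>} \<setminus> {0}\<close>, and each of
  them is open, being the set of \<open>x\<close> with \<open>(\<alpha>,1,\<alpha>) x (\<beta>,1,\<beta>) \<noteq> 0\<close>. Choose a regular open
  \<open>V \<ni> 0\<close> inside \<open>U(0)\<close>. If a block is not contained in \<open>U(0)\<close>, then it is not contained in
  \<open>cl V\<close> either (an open subset of \<open>cl V\<close> lies in \<open>int cl V = V\<close>), so removing \<open>cl V\<close> from
  these blocks gives a family of non-empty disjoint open sets. It is locally finite: \<open>V\<close>
  misses all of them, and every other point has one block as a neighbourhood.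
  Pseudocompactness makes it finite.\<close>

lemma openin_subset_regular_open:
  assumes "regular_open_in X V" "openin X W" "W \<subseteq> X closure_of V"
  shows "W \<subseteq> V"
  using assms interior_of_maximal by (metis regular_open_in_def)

lemma regular_open_in_imp_openin: "regular_open_in X V \<Longrightarrow> openin X V"
  by (metis openin_interior_of regular_open_in_def)

lemma pseudocompact_semiregular_finite_not_subset:
  assumes pseudo: "pseudocompact_space X" and semireg: "semiregular_space X"
    and U: "openin X U" "p \<in> U"
    and opn: "\<And>k. k \<in> K \<Longrightarrow> openin X (B k)"
    and disj: "disjoint_family_on B K"
    and cover: "topspace X - {p} \<subseteq> (\<Union>k\<in>K. B k)"
  shows "finite {k \<in> K. \<not> B k \<subseteq> U}"
proof -
  define Bad where "Bad = {k \<in> K. \<not> B k \<subseteq> U}"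
  obtain V where V: "regular_open_in X V" "p \<in> V" "V \<subseteq> U"
    using semireg U unfolding semiregular_space_def by blast
  have V_open: "openin X V"
    using V(1) by (rule regular_open_in_imp_openin)
  define F where "F k = B k - X closure_of V" for k
  have F_open: "openin X (F k)" if "k \<in> Bad" for k
    using that opn by (auto simp: F_def Bad_def)
  have F_nonempty: "F k \<noteq> {}" if "k \<in> Bad" for k
  proof
    assume "F k = {}"
    then have "B k \<subseteq> V"
      using that opn openin_subset_regular_open[OF V(1)] by (auto simp: F_def Bad_def)
    with that V(3) show False by (auto simp: Bad_def)
  qed
  have F_inj: "inj_on F Bad"
  proof (rule inj_onI)
    fix k l assume "k \<in> Bad" "l \<in> Bad" "F k = F l"
    then show "k = l"
      using F_nonempty[of k] disj by (auto simp: F_def Bad_def disjoint_family_on_def)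
  qed
  have "locally_finite_in X (F ` Bad)"
    unfolding locally_finite_in_def
  proof (intro conjI ballI)
    show "\<Union> (F ` Bad) \<subseteq> topspace X"
      using F_open openin_subset by blast
  next
    fix x assume x: "x \<in> topspace X"
    show "\<exists>W. openin X W \<and> x \<in> W \<and> finite {A \<in> F ` Bad. A \<inter> W \<noteq> {}}"
    proof (cases "x = p")
      case True
      have "{A \<in> F ` Bad. A \<inter> V \<noteq> {}} = {}"
        using closure_of_subset[OF openin_subset[OF V_open]] by (auto simp: F_def)
      then show ?thesis
        using True V(2) V_open by (metis finite.emptyI)
    next
      case False
      then obtain k where k: "k \<in> K" "x \<in> B k"
        using x cover by blast
      have "{A \<in> F ` Bad. A \<inter> B k \<noteq> {}} \<subseteq> {F k}"
      proof clarify
        fix l assume l: "l \<in> Bad" "F l \<inter> B k \<noteq> {}"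
        then have "B l \<inter> B k \<noteq> {}"
          unfolding F_def by blast
        then have "l = k"
          using disjoint_family_onD[OF disj, of l k] l(1) k(1) by (auto simp: Bad_def)
        then show "F l = F k"
          by simp
      qed
      then show ?thesis
        using k opn by (meson finite.emptyI finite_insert finite_subset)
    qed
  qed
  with pseudo have "finite (F ` Bad)"
    using F_open F_nonempty unfolding pseudocompact_space_def by blast
  then have "finite Bad"
    using F_inj by (simp add: finite_image_iff)
  then show ?thesis
    by (simp add: Bad_def)
qed

definition nonzero_block ::
    "('i \<Rightarrow> 'a set) \<Rightarrow> ('i \<Rightarrow> 'a) \<Rightarrow> 'i \<Rightarrow> 'c \<Rightarrow> 'c
     \<Rightarrow> ('i \<times> 'c \<times> 'a \<times> 'c) option set" where
  "nonzero_block T z i \<alpha> \<beta> = {Some (i, \<alpha>, s, \<beta>) | s. s \<in> T i \<and> s \<noteq> z i}"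

lemma block_eq_insert_nonzero_block:
  "block T z i \<alpha> \<beta> = insert None (nonzero_block T z i \<alpha> \<beta>)"
  by (simp add: block_def nonzero_block_def)

lemma disjoint_family_on_nonzero_block:
  "disjoint_family_on (\<lambda>(i, \<alpha>, \<beta>). nonzero_block T z i \<alpha> \<beta>) K"
  by (auto simp: disjoint_family_on_def nonzero_block_def)

lemma osum_carrier_minus_zero:
  "osum_carrier I \<Lambda> T z - {None} =
     (\<Union>(i, \<alpha>, \<beta>)\<in>{(i, \<alpha>, \<beta>). i \<in> I \<and> \<alpha> \<in> \<Lambda> i \<and> \<beta> \<in> \<Lambda> i}. nonzero_block T z i \<alpha> \<beta>)"
  by (auto simp: osum_carrier_def nonzero_block_def)

lemma semitop_monoid_with_zero_trivial:
  assumes "semitop_monoid_with_zero X m z e" "e = z"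
  shows "topspace X = {z}"
proof -
  have "x = z" if "x \<in> topspace X" for x
    using assms that unfolding semitop_monoid_with_zero_def by metis
  moreover have "z \<in> topspace X"
    using assms(1) by (simp add: semitop_monoid_with_zero_def)
  ultimately show ?thesis
    by blast
qed

lemma osum_mult_diag_units_neq_zero_iff:
  assumes unit: "\<And>s. s \<in> T i \<Longrightarrow> m i u s = s \<and> m i s u = s"
    and x: "x \<in> osum_carrier I \<Lambda> T z"
  shows "osum_mult m z (Some (i, \<alpha>, u, \<alpha>)) (osum_mult m z x (Some (i, \<beta>, u, \<beta>))) \<noteq> None
           \<longleftrightarrow> x \<in> nonzero_block T z i \<alpha> \<beta>"
proof -
  from x consider "x = None"
    | j \<gamma> s \<delta> where "x = Some (j, \<gamma>, s, \<delta>)" "s \<in> T j" "s \<noteq> z j"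
    by (auto simp: osum_carrier_def)
  then show ?thesis
  proof cases
    case 1
    then show ?thesis
      by (simp add: nonzero_block_def)
  next
    case 2
    then show ?thesis
      using unit by (auto simp: nonzero_block_def)
  qed
qed

lemma openin_nonzero_block:
  assumes monoid: "semitop_monoid_with_zero (\<sigma> i) (m i) (z i) (e i)"
    and carrier: "topspace \<tau> = osum_carrier I \<Lambda> (\<lambda>i. topspace (\<sigma> i)) z"
    and semitop: "semitop_semigroup \<tau> (osum_mult m z)"
    and idx: "i \<in> I" "\<alpha> \<in> \<Lambda> i" "\<beta> \<in> \<Lambda> i"
  shows "openin \<tau> (nonzero_block (\<lambda>i. topspace (\<sigma> i)) z i \<alpha> \<beta>)"
proof (cases "e i = z i")
  case True
  then show ?thesis
    using semitop_monoid_with_zero_trivial[OF monoid] by (simp add: nonzero_block_def)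
next
  case False
  let ?mult = "osum_mult m z"
  let ?a = "Some (i, \<alpha>, e i, \<alpha>)" and ?b = "Some (i, \<beta>, e i, \<beta>)"
  let ?N = "nonzero_block (\<lambda>i. topspace (\<sigma> i)) z i \<alpha> \<beta>"
  have e_in: "e i \<in> topspace (\<sigma> i)"
    and unit: "\<And>s. s \<in> topspace (\<sigma> i) \<Longrightarrow> m i (e i) s = s \<and> m i s (e i) = s"
    using monoid by (auto simp: semitop_monoid_with_zero_def)
  have a: "?a \<in> topspace \<tau>" and b: "?b \<in> topspace \<tau>"
    using idx e_in False carrier by (auto simp: osum_carrier_def)
  have mult_closed: "\<And>x y. x \<in> topspace \<tau> \<Longrightarrow> y \<in> topspace \<tau> \<Longrightarrow> ?mult x y \<in> topspace \<tau>"
    and translation_continuous: "\<And>c. c \<in> topspace \<tau> \<Longrightarrow>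
           continuous_map \<tau> \<tau> (?mult c) \<and> continuous_map \<tau> \<tau> (\<lambda>x. ?mult x c)"
    using semitop by (simp_all add: semitop_semigroup_def)
  have "continuous_map \<tau> \<tau> (?mult ?a \<circ> (\<lambda>x. ?mult x ?b))"
    using continuous_map_compose translation_continuous[OF a] translation_continuous[OF b] by blast
  then have "continuous_map \<tau> \<tau> (\<lambda>x. ?mult ?a (?mult x ?b))"
    by (simp only: comp_def)
  moreover have "openin \<tau> (topspace \<tau> - {None})"
  proof (rule openin_diff[OF openin_topspace], rule closedin_t1_singleton)
    show "t1_space \<tau>"
      using semitop by (simp add: semitop_semigroup_def Hausdorff_imp_t1_space)
    show "None \<in> topspace \<tau>"
      by (simp add: carrier osum_carrier_def)
  qed
  ultimately have open_preimage: "openin \<tau> {x \<in> topspace \<tau>. ?mult ?a (?mult x ?b) \<in> topspace \<tau> - {None}}"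
    by (rule openin_continuous_map_preimage)
  have preimage_iff: "?mult ?a (?mult x ?b) \<in> topspace \<tau> - {None} \<longleftrightarrow> x \<in> ?N"
    if x: "x \<in> topspace \<tau>" for x
  proof -
    have "?mult ?a (?mult x ?b) \<in> topspace \<tau>"
      using mult_closed[OF a mult_closed[OF x b]] .
    moreover have "?mult ?a (?mult x ?b) \<noteq> None \<longleftrightarrow> x \<in> ?N"
      using osum_mult_diag_units_neq_zero_iff
        [where T = "\<lambda>i. topspace (\<sigma> i)" and m = m and i = i and u = "e i",
         OF unit x[unfolded carrier]] .
    ultimately show ?thesis
      by blast
  qed
  have "{x \<in> topspace \<tau>. ?mult ?a (?mult x ?b) \<in> topspace \<tau> - {None}} = ?N"
  proof (rule set_eqI)
    fix x
    have "?N \<subseteq> topspace \<tau>"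
      using idx carrier by (auto simp: osum_carrier_def nonzero_block_def)
    then show "x \<in> {x \<in> topspace \<tau>. ?mult ?a (?mult x ?b) \<in> topspace \<tau> - {None}} \<longleftrightarrow> x \<in> ?N"
      using preimage_iff[of x] by blast
  qed
  with open_preimage show ?thesis
    by simp
qed

theorem proposition2p8:
  fixes I :: "'i set"
    and \<Lambda> :: "'i \<Rightarrow> 'c set"
    and \<sigma> :: "'i \<Rightarrow> 'a topology"
    and m :: "'i \<Rightarrow> 'a \<Rightarrow> 'a \<Rightarrow> 'a"
    and z e :: "'i \<Rightarrow> 'a"
    and \<tau> :: "('i \<times> 'c \<times> 'a \<times> 'c) option topology"
  assumes monoids: "\<And>i. i \<in> I \<Longrightarrow> semitop_monoid_with_zero (\<sigma> i) (m i) (z i) (e i)"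
    and carrier: "topspace \<tau> = osum_carrier I \<Lambda> (\<lambda>i. topspace (\<sigma> i)) z"
    and semitop: "semitop_semigroup \<tau> (osum_mult m z)"
    and semireg: "semiregular_space \<tau>"
    and pseudo: "pseudocompact_space \<tau>"
    and brandt: "\<And>i. i \<in> I \<Longrightarrow> \<exists>\<alpha>\<in>\<Lambda> i.
                   homeomorphic_map (\<sigma> i)
                     (subtopology \<tau> (block (\<lambda>i. topspace (\<sigma> i)) z i \<alpha> \<alpha>))
                     (diag_emb z i \<alpha>)"
    and U: "openin \<tau> U" "None \<in> U"
  shows "finite {(i, \<alpha>, \<beta>). i \<in> I \<and> \<alpha> \<in> \<Lambda> i \<and> \<beta> \<in> \<Lambda> i \<and>
                   \<not> block (\<lambda>i. topspace (\<sigma> i)) z i \<alpha> \<beta> \<subseteq> U}"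
proof -
  let ?T = "\<lambda>i. topspace (\<sigma> i)"
  let ?K = "{(i, \<alpha>, \<beta>). i \<in> I \<and> \<alpha> \<in> \<Lambda> i \<and> \<beta> \<in> \<Lambda> i}"
  let ?B = "\<lambda>(i, \<alpha>, \<beta>). nonzero_block ?T z i \<alpha> \<beta>"
  have "finite {k \<in> ?K. \<not> ?B k \<subseteq> U}"
  proof (rule pseudocompact_semiregular_finite_not_subset[OF pseudo semireg U])
    show "openin \<tau> (?B k)" if "k \<in> ?K" for k
      using that monoids openin_nonzero_block[where e = e, OF _ carrier semitop] by auto
    show "disjoint_family_on ?B ?K"
      by (rule disjoint_family_on_nonzero_block)
    show "topspace \<tau> - {None} \<subseteq> (\<Union>k\<in>?K. ?B k)"
      by (simp add: carrier osum_carrier_minus_zero)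
  qed
  moreover have "{(i, \<alpha>, \<beta>). i \<in> I \<and> \<alpha> \<in> \<Lambda> i \<and> \<beta> \<in> \<Lambda> i \<and> \<not> block ?T z i \<alpha> \<beta> \<subseteq> U}
                   = {k \<in> ?K. \<not> ?B k \<subseteq> U}"
    using U(2) by (auto simp: block_eq_insert_nonzero_block)
  ultimately show ?thesis
    by simp
qed

end
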